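(* There is no deterministic online algorithm with competitive ratio $o(n)$ for the degree-bounded group Steiner tree problem, where $n$ is the number of vertices. That is, for every deterministic online algorithm $\mathcal{A}$ and every function $f$ with $f(n)=o(n)$, there exist an instance on some number $n$ of vertices and a sequence of demand groups such that the maximum degree of $\mathcal{A}$'s final subgraph exceeds $f(n)\cdot\mathrm{OPT}$.
   Context: Online degree-bounded group Steiner tree: an undirected graph $G$ with a root vertex is given in advance; demands are subsets (groups) of vertices arriving one by one, and after each arrival the online algorithm must add edges (never removing any) so that for every group seen so far, at least one vertex of the group is connected to the root. The objective is to minimize the maximum vertex degree of the final subgraph; $\mathrm{OPT}$ is the minimum maximum degree of a subgraph in which every demand group has a vertex connected to the root. The competitive ratio is the worst-case ratio of the algorithm's maximum degree to $\mathrm{OPT}$. *)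

theory Defs
  imports Main "HOL-Library.Landau_Symbols"
begin

text \<open>Vertices of an instance on n vertices are 0..n-1; edges are 2-element vertex sets
  (simple undirected graph).  Demand groups arrive as a list of vertex sets.\<close>

definition graph_on :: "nat \<Rightarrow> nat set set \<Rightarrow> bool" where
  "graph_on n E \<longleftrightarrow> (\<forall>e\<in>E. e \<subseteq> {..<n} \<and> card e = 2)"

definition conn :: "nat set set \<Rightarrow> nat \<Rightarrow> nat \<Rightarrow> bool" where
  "conn H r v \<longleftrightarrow> (r, v) \<in> {(x, y). {x, y} \<in> H}\<^sup>*"

definition feasible :: "nat set set \<Rightarrow> nat \<Rightarrow> nat set list \<Rightarrow> nat set set \<Rightarrow> bool" where
  "feasible E r gs H \<longleftrightarrow> H \<subseteq> E \<and> (\<forall>g\<in>set gs. \<exists>v\<in>g. conn H r v)"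

definition valid_instance :: "nat \<Rightarrow> nat set set \<Rightarrow> nat \<Rightarrow> nat set list \<Rightarrow> bool" where
  "valid_instance n E r gs \<longleftrightarrow> graph_on n E \<and> r < n \<and> (\<forall>g\<in>set gs. g \<subseteq> {..<n})
     \<and> (\<exists>H. feasible E r gs H)"

definition deg :: "nat set set \<Rightarrow> nat \<Rightarrow> nat" where
  "deg H v = card {e\<in>H. v \<in> e}"

definition maxdeg :: "nat \<Rightarrow> nat set set \<Rightarrow> nat" where
  "maxdeg n H = Max ((\<lambda>v. deg H v) ` {..<n})"

definition opt :: "nat \<Rightarrow> nat set set \<Rightarrow> nat \<Rightarrow> nat set list \<Rightarrow> nat" where
  "opt n E r gs = Min (maxdeg n ` {H. feasible E r gs H})"

text \<open>A deterministic online algorithm: given the instance (n, E, r) and the demand groups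
  seen so far, it returns its current edge set.  Being a function of the prefix makes it
  deterministic and online.\<close>
definition online_alg :: "(nat \<Rightarrow> nat set set \<Rightarrow> nat \<Rightarrow> nat set list \<Rightarrow> nat set set) \<Rightarrow> bool" where
  "online_alg A \<longleftrightarrow> (\<forall>n E r gs. valid_instance n E r gs \<longrightarrow>
      feasible E r gs (A n E r gs) \<and> (\<forall>k\<le>length gs. A n E r (take k gs) \<subseteq> A n E r gs))"

end

theory Submission
  imports Defs
begin

text \<open>The adversary uses the star with centre 0 (the root) and leaves \<open>1, \<dots>, n - 1\<close>, and
  always requests the set of leaves not yet connected to the root. On a star, connecting a leaf
  means buying its edge, so each request forces the algorithm to buy a new edge at the root, until
  it owns the whole star and has degree \<open>n - 1\<close> there. Every request contains all later ones, so
  a single edge to a leaf of the last request serves all of them and \<open>OPT \<le> 1\<close>.\<close>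

lemma conn_mono: "H \<subseteq> H' \<Longrightarrow> conn H r v \<Longrightarrow> conn H' r v"
  unfolding conn_def by (erule rtrancl_mono[THEN subsetD, rotated]) auto

lemma deg_le_maxdeg: "v < n \<Longrightarrow> finite H \<Longrightarrow> deg H v \<le> maxdeg n H"
  unfolding maxdeg_def by (intro Max_ge) auto

lemma maxdeg_le_card:
  assumes "0 < n" and "finite H"
  shows "maxdeg n H \<le> card H"
proof -
  have "deg H v \<le> card H" for v
    unfolding deg_def using assms(2) by (intro card_mono) auto
  then show ?thesis
    unfolding maxdeg_def using assms(1) by (subst Max_le_iff) auto
qed

lemma opt_le_maxdeg:
  assumes "finite E" and "feasible E r gs H"
  shows "opt n E r gs \<le> maxdeg n H"
proof -
  have "{H. feasible E r gs H} \<subseteq> Pow E"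
    unfolding feasible_def by auto
  then have "finite (maxdeg n ` {H. feasible E r gs H})"
    using assms(1) by (auto intro: finite_subset)
  then show ?thesis
    unfolding opt_def using assms(2) by (intro Min_le) auto
qed

lemma online_alg_feasible:
  "online_alg A \<Longrightarrow> valid_instance n E r gs \<Longrightarrow> feasible E r gs (A n E r gs)"
  unfolding online_alg_def by blast

lemma online_alg_mono_append:
  assumes "online_alg A" and "valid_instance n E r (gs @ gs')"
  shows "A n E r gs \<subseteq> A n E r (gs @ gs')"
proof -
  have "\<forall>k\<le>length (gs @ gs'). A n E r (take k (gs @ gs')) \<subseteq> A n E r (gs @ gs')"
    using assms unfolding online_alg_def by blast
  from this[rule_format, of "length gs"] show ?thesis
    by simp
qed

definition star :: "nat \<Rightarrow> nat set set" where
  "star n = (\<lambda>v. {0, v}) ` {1..<n}"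

lemma finite_star: "finite (star n)"
  unfolding star_def by simp

lemma graph_on_star: "graph_on n (star n)"
  unfolding graph_on_def star_def by auto

lemma deg_star_centre: "deg (star n) 0 = n - 1"
proof -
  have "{e \<in> star n. 0 \<in> e} = star n"
    unfolding star_def by auto
  moreover have "inj_on (\<lambda>v. {0::nat, v}) {1..<n}"
    by (auto simp: inj_on_def doubleton_eq_iff)
  ultimately show ?thesis
    unfolding deg_def star_def by (simp add: card_image)
qed

lemma conn_centre_star:
  assumes "H \<subseteq> star n" and "conn H 0 v"
  shows "v = 0 \<or> {0, v} \<in> H"
  using assms(2) unfolding conn_def
proof (induction v rule: rtrancl_induct)
  case (step y z)
  then have "{y, z} \<in> H" by simp
  moreover obtain j where "{y, z} = {0, j}" "1 \<le> j"
    using \<open>{y, z} \<in> H\<close> assms(1) unfolding star_def by auto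
  ultimately show ?case
    using step.IH by (auto simp: doubleton_eq_iff insert_commute)
qed simp

lemma feasible_star_single_edge:
  assumes "w \<in> {1..<n}" and "\<forall>g\<in>set gs. w \<in> g"
  shows "feasible (star n) 0 gs {{0, w}}"
  using assms unfolding feasible_def conn_def star_def by (auto intro!: r_into_rtrancl)

lemma opt_star_common_leaf:
  assumes "w \<in> {1..<n}" and "\<forall>g\<in>set gs. w \<in> g"
  shows "opt n (star n) 0 gs \<le> 1"
proof -
  have "opt n (star n) 0 gs \<le> maxdeg n {{0, w}}"
    using finite_star feasible_star_single_edge[OF assms] by (rule opt_le_maxdeg)
  also have "\<dots> \<le> 1"
    using maxdeg_le_card[of n "{{0, w}}"] assms(1) by simp
  finally show ?thesis .
qed

lemma valid_instance_star_common_leaf: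
  assumes "w \<in> {1..<n}" and "\<forall>g\<in>set gs. w \<in> g" and "\<forall>g\<in>set gs. g \<subseteq> {1..<n}"
  shows "valid_instance n (star n) 0 gs"
proof -
  have "\<forall>g\<in>set gs. g \<subseteq> {..<n}"
    using assms(3) by fastforce
  then show ?thesis
    using assms(1) graph_on_star feasible_star_single_edge[OF assms(1,2)]
    unfolding valid_instance_def by auto
qed

definition connected_leaves ::
    "(nat \<Rightarrow> nat set set \<Rightarrow> nat \<Rightarrow> nat set list \<Rightarrow> nat set set) \<Rightarrow> nat \<Rightarrow> nat set list \<Rightarrow> nat set"
  where "connected_leaves A n gs = {v \<in> {1..<n}. conn (A n (star n) 0 gs) 0 v}"

lemma connected_leaves_subset: "connected_leaves A n gs \<subseteq> {1..<n}"
  unfolding connected_leaves_def by auto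

definition adversarial ::
    "(nat \<Rightarrow> nat set set \<Rightarrow> nat \<Rightarrow> nat set list \<Rightarrow> nat set set) \<Rightarrow> nat \<Rightarrow> nat set list \<Rightarrow> bool"
  where "adversarial A n gs \<longleftrightarrow>
    (\<forall>g\<in>set gs. g \<subseteq> {1..<n} \<and> {1..<n} - connected_leaves A n gs \<subseteq> g)
    \<and> (\<exists>w\<in>{1..<n}. \<forall>g\<in>set gs. w \<in> g)"

lemma adversarial_Nil: "1 < n \<Longrightarrow> adversarial A n []"
  unfolding adversarial_def by auto

lemma adversarial_common_leaf:
  assumes "adversarial A n gs"
  obtains w where "w \<in> {1..<n}" and "\<forall>g\<in>set gs. w \<in> g" and "\<forall>g\<in>set gs. g \<subseteq> {1..<n}"
  using assms unfolding adversarial_def by auto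

lemma valid_instance_adversarial:
  "adversarial A n gs \<Longrightarrow> valid_instance n (star n) 0 gs"
  by (elim adversarial_common_leaf valid_instance_star_common_leaf)

lemma opt_adversarial: "adversarial A n gs \<Longrightarrow> opt n (star n) 0 gs \<le> 1"
  by (elim adversarial_common_leaf opt_star_common_leaf)

lemma adversarial_request_unconnected:
  assumes alg: "online_alg A" and adv: "adversarial A n gs"
    and unconn: "connected_leaves A n gs \<noteq> {1..<n}"
  defines "U \<equiv> {1..<n} - connected_leaves A n gs"
  shows "adversarial A n (gs @ [U])"
    and "connected_leaves A n gs \<subset> connected_leaves A n (gs @ [U])"
proof -
  let ?gs' = "gs @ [U]"
  have U_in_groups: "\<forall>g\<in>set gs. U \<subseteq> g"
    using adv unfolding adversarial_def U_def by simp
  have groups: "\<forall>g\<in>set ?gs'. g \<subseteq> {1..<n}"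
    using adv unfolding adversarial_def U_def by auto
  have "U \<noteq> {}"
    using unconn connected_leaves_subset[of A n gs] unfolding U_def
    by (metis Diff_eq_empty_iff subset_antisym)
  then obtain w where "w \<in> U"
    by blast
  have common: "w \<in> {1..<n}" "\<forall>g\<in>set ?gs'. w \<in> g"
    using \<open>w \<in> U\<close> U_in_groups by (simp add: U_def, auto)
  have valid: "valid_instance n (star n) 0 ?gs'"
    using common groups by (rule valid_instance_star_common_leaf)
  have mono: "connected_leaves A n gs \<subseteq> connected_leaves A n ?gs'"
    using conn_mono[OF online_alg_mono_append[OF alg valid]] unfolding connected_leaves_def by blast
  obtain u where "u \<in> U" and "conn (A n (star n) 0 ?gs') 0 u"
    using online_alg_feasible[OF alg valid] unfolding feasible_def by auto
  then have "u \<in> connected_leaves A n ?gs' - connected_leaves A n gs"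
    unfolding U_def connected_leaves_def by simp
  with mono show "connected_leaves A n gs \<subset> connected_leaves A n ?gs'"
    by blast
  have "{1..<n} - connected_leaves A n ?gs' \<subseteq> U"
    using mono unfolding U_def by blast
  then have "\<forall>g\<in>set ?gs'. {1..<n} - connected_leaves A n ?gs' \<subseteq> g"
    using U_in_groups by auto
  with groups common show "adversarial A n ?gs'"
    unfolding adversarial_def by blast
qed

lemma adversarial_connects_all_leaves:
  assumes "online_alg A" and "adversarial A n gs"
  shows "\<exists>gs'. adversarial A n gs' \<and> connected_leaves A n gs' = {1..<n}"
  using assms(2)
proof (induction "card ({1..<n} - connected_leaves A n gs)" arbitrary: gs rule: less_induct)
  case less
  show ?case
  proof (cases "connected_leaves A n gs = {1..<n}")
    case True
    with less.prems show ?thesis by blast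
  next
    case False
    define gs' where "gs' = gs @ [{1..<n} - connected_leaves A n gs]"
    have adv': "adversarial A n gs'"
      and grows: "connected_leaves A n gs \<subset> connected_leaves A n gs'"
      using adversarial_request_unconnected[OF assms(1) less.prems False] unfolding gs'_def by simp_all
    have "{1..<n} - connected_leaves A n gs' \<subset> {1..<n} - connected_leaves A n gs"
      using grows connected_leaves_subset[of A n gs'] by blast
    then have "card ({1..<n} - connected_leaves A n gs') < card ({1..<n} - connected_leaves A n gs)"
      by (rule psubset_card_mono[rotated]) simp
    then show ?thesis
      using adv' by (rule less.hyps)
  qed
qed

lemma alg_buys_star:
  assumes alg: "online_alg A" and adv: "adversarial A n gs"
    and all: "connected_leaves A n gs = {1..<n}"
  shows "A n (star n) 0 gs = star n"
proof
  show sub: "A n (star n) 0 gs \<subseteq> star n"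
    using online_alg_feasible[OF alg valid_instance_adversarial[OF adv]]
    unfolding feasible_def by (rule conjunct1)
  have "{0, v} \<in> A n (star n) 0 gs" if v: "v \<in> {1..<n}" for v
  proof -
    have "conn (A n (star n) 0 gs) 0 v"
      using v all unfolding connected_leaves_def by blast
    from conn_centre_star[OF sub this] v show ?thesis
      by auto
  qed
  then show "star n \<subseteq> A n (star n) 0 gs"
    unfolding star_def by blast
qed

theorem theorem4:
  fixes A :: "nat \<Rightarrow> nat set set \<Rightarrow> nat \<Rightarrow> nat set list \<Rightarrow> nat set set"
    and f :: "nat \<Rightarrow> real"
  assumes "online_alg A"
    and "f \<in> o(\<lambda>n. real n)"
  shows "\<exists>n E r gs. valid_instance n E r gs \<and>
           real (maxdeg n (A n E r gs)) > f n * real (opt n E r gs)"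
proof -
  have "\<forall>\<^sub>F n in at_top. norm (f n) \<le> 1/2 * norm (real n)"
    by (rule landau_o.smallD[OF assms(2)]) simp
  moreover have "\<forall>\<^sub>F n in at_top. (3::nat) \<le> n"
    by (rule eventually_ge_at_top)
  ultimately have "\<forall>\<^sub>F n in at_top. f n \<le> real n / 2 \<and> 3 \<le> n"
    by eventually_elim auto
  then obtain n where fn: "f n \<le> real n / 2" and n: "3 \<le> n"
    using eventually_happens'[OF trivial_limit_at_top_linorder] by blast
  obtain gs where adv: "adversarial A n gs" and all: "connected_leaves A n gs = {1..<n}"
    using adversarial_connects_all_leaves[OF assms(1) adversarial_Nil[of n A]] n by auto
  have "f n * real (opt n (star n) 0 gs) \<le> max 0 (f n)"
    using opt_adversarial[OF adv] by (cases "opt n (star n) 0 gs") auto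
  also have "\<dots> < real (deg (star n) 0)"
    using fn n by (simp add: deg_star_centre)
  also have "\<dots> \<le> real (maxdeg n (A n (star n) 0 gs))"
    using deg_le_maxdeg[OF _ finite_star] n by (simp add: alg_buys_star[OF assms(1) adv all])
  finally show ?thesis
    using valid_instance_adversarial[OF adv] by blast
qed

end
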